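(* Let $G$ be a graph and $(x,y)\in E(G)$. Let $\Delta_G(x,y)=N_G(x)\cap N_G(y)$, $R_G(x)=(N_G(x)\setminus\{y\})\setminus\Delta_G(x,y)$ and $R_G(y)=(N_G(y)\setminus\{x\})\setminus\Delta_G(x,y)$. Suppose that for some $k\le\min\{|R_G(x)|,|R_G(y)|\}$ there exist distinct $a_1,\dots,a_k\in R_G(x)$ and distinct $b_1,\dots,b_k\in R_G(y)$ with $d_G(a_i,b_i)\le 2$ for all $i$ (a 2-matching of size $k$). Then $$\kappa(x,y)\ge -2+\frac{3|\Delta_G(x,y)|+k+2}{\max\{d_x,d_y\}}.$$ Moreover, if $k=\min\{|R_G(x)|,|R_G(y)|\}$, then $$\kappa(x,y)\ge -2+\frac{2|\Delta_G(x,y)|+\min\{d_x,d_y\}+1}{\max\{d_x,d_y\}}.$$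
   Context: Graphs are locally finite and unweighted. $d_G$ is the shortest-path metric, $N_G(v)$ the neighbour set and $d_v$ the degree of $v$; $m_v$ is the uniform probability measure on $N_G(v)$, and for an edge $(x,y)$, $\kappa(x,y)=1-W_1(m_x,m_y)$, where $W_1$ is the Wasserstein-1 (transportation) distance with respect to $d_G$. *)

theory Defs
  imports Main "HOL-Library.Extended_Real" Complex_Main
begin

definition graph :: "('a \<Rightarrow> 'a \<Rightarrow> bool) \<Rightarrow> bool" where
  "graph E \<longleftrightarrow> (\<forall>u v. E u v \<longrightarrow> E v u) \<and> (\<forall>u. \<not> E u u) \<and> (\<forall>u. finite {v. E u v})"

definition nbrs :: "('a \<Rightarrow> 'a \<Rightarrow> bool) \<Rightarrow> 'a \<Rightarrow> 'a set" where
  "nbrs E v = {u. E v u}"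

definition deg :: "('a \<Rightarrow> 'a \<Rightarrow> bool) \<Rightarrow> 'a \<Rightarrow> nat" where
  "deg E v = card (nbrs E v)"

text \<open>Shortest-path distance (number of edges of a shortest walk).  Only used
between vertices that are connected.\<close>
definition gdist :: "('a \<Rightarrow> 'a \<Rightarrow> bool) \<Rightarrow> 'a \<Rightarrow> 'a \<Rightarrow> real" where
  "gdist E u v = real (LEAST n. (E ^^ n) u v)"

definition couplings :: "('a \<Rightarrow> 'a \<Rightarrow> bool) \<Rightarrow> 'a \<Rightarrow> 'a \<Rightarrow> ('a \<Rightarrow> 'a \<Rightarrow> real) set" where
  "couplings E x y = {\<pi>. (\<forall>u v. 0 \<le> \<pi> u v)
      \<and> (\<forall>u v. \<pi> u v \<noteq> 0 \<longrightarrow> u \<in> nbrs E x \<and> v \<in> nbrs E y)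
      \<and> (\<forall>u\<in>nbrs E x. (\<Sum>v\<in>nbrs E y. \<pi> u v) = 1 / real (deg E x))
      \<and> (\<forall>v\<in>nbrs E y. (\<Sum>u\<in>nbrs E x. \<pi> u v) = 1 / real (deg E y))}"

definition W1 :: "('a \<Rightarrow> 'a \<Rightarrow> bool) \<Rightarrow> 'a \<Rightarrow> 'a \<Rightarrow> real" where
  "W1 E x y = Inf {(\<Sum>(u,v)\<in>nbrs E x \<times> nbrs E y. \<pi> u v * gdist E u v) | \<pi>. \<pi> \<in> couplings E x y}"

definition ollivier :: "('a \<Rightarrow> 'a \<Rightarrow> bool) \<Rightarrow> 'a \<Rightarrow> 'a \<Rightarrow> real" where
  "ollivier E x y = 1 - W1 E x y"

end

theory Submission
  imports Defs
begin

text \<open>Transport the mass \<open>1/max d\<^sub>x d\<^sub>y\<close> of each vertex of a set \<open>A \<subseteq> N(x)\<close> along an injection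
  \<open>p : A \<rightarrow> N(y)\<close> (common neighbours stay put, \<open>y \<mapsto> x\<close>, \<open>a\<^sub>i \<mapsto> b\<^sub>i\<close>), and couple the
  remaining mass by the normalised product of the residual measures.  Since any two
  neighbours of \<open>x\<close> and \<open>y\<close> are at distance at most 3, the residual part costs at most
  three times its mass, while the matched part costs \<open>1 + 2k\<close> times \<open>1/max d\<^sub>x d\<^sub>y\<close>.\<close>

lemma gdist_le_relpowp: "(E ^^ n) u v \<Longrightarrow> gdist E u v \<le> real n"
  unfolding gdist_def by (simp add: Least_le)

lemma gdist_nonneg: "0 \<le> gdist E u v"
  unfolding gdist_def by simp

lemma gdist_self: "gdist E u u = 0"
  using gdist_le_relpowp[of 0 E u u] gdist_nonneg[of E u u] by simp

lemma gdist_le_1: "E u v \<Longrightarrow> gdist E u v \<le> 1"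
  using gdist_le_relpowp[of 1 E u v] by (simp add: relcompp.intros)

lemma gdist_le_3: "E u x \<Longrightarrow> E x y \<Longrightarrow> E y v \<Longrightarrow> gdist E u v \<le> 3"
  using gdist_le_relpowp[of 3 E u v] by (auto simp: numeral_eq_Suc relcompp.intros)

locale partial_matching_plan =
  fixes X :: "'a set" and Y :: "'b set" and A :: "'a set" and p :: "'a \<Rightarrow> 'b"
    and c :: real and \<mu> :: "'a \<Rightarrow> real" and \<nu> :: "'b \<Rightarrow> real"
  assumes finite_X: "finite X" and finite_Y: "finite Y"
    and A_subset: "A \<subseteq> X" and inj_p: "inj_on p A" and p_image: "p ` A \<subseteq> Y"
    and c_nonneg: "0 \<le> c"
    and \<mu>_ge: "u \<in> X \<Longrightarrow> (if u \<in> A then c else 0) \<le> \<mu> u"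
    and \<nu>_ge: "v \<in> Y \<Longrightarrow> (if v \<in> p ` A then c else 0) \<le> \<nu> v"
    and mass_eq: "sum \<mu> X = sum \<nu> Y"
begin

definition residual_x :: "'a \<Rightarrow> real" where
  "residual_x u = \<mu> u - (if u \<in> A then c else 0)"

definition residual_y :: "'b \<Rightarrow> real" where
  "residual_y v = \<nu> v - (if v \<in> p ` A then c else 0)"

definition residual_mass :: real where
  "residual_mass = sum \<mu> X - c * real (card A)"

definition plan :: "'a \<Rightarrow> 'b \<Rightarrow> real" where
  "plan u v = (if u \<in> A \<and> v = p u then c else 0) + residual_x u * residual_y v / residual_mass"

lemma residual_x_nonneg: "u \<in> X \<Longrightarrow> 0 \<le> residual_x u"
  using \<mu>_ge by (simp add: residual_x_def)

lemma residual_y_nonneg: "v \<in> Y \<Longrightarrow> 0 \<le> residual_y v"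
  using \<nu>_ge by (simp add: residual_y_def)

lemma sum_residual_x: "sum residual_x X = residual_mass"
  using finite_X A_subset
  by (simp add: residual_x_def residual_mass_def sum_subtractf sum.If_cases Int_absorb1)

lemma sum_residual_y: "sum residual_y Y = residual_mass"
  using finite_Y p_image card_image[OF inj_p] mass_eq
  by (simp add: residual_y_def residual_mass_def sum_subtractf sum.If_cases Int_absorb1)

lemma residual_mass_nonneg: "0 \<le> residual_mass"
  using sum_residual_x residual_x_nonneg by (metis sum_nonneg)

text \<open>When all the mass is matched the residual part is \<open>0 / 0 = 0\<close>, which is harmless since
  every residual then vanishes.\<close>

lemma residual_x_normalised:
  assumes "u \<in> X"
  shows "residual_x u * residual_mass / residual_mass = residual_x u"
proof (cases "residual_mass = 0")
  case True
  then have "residual_x u = 0"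
    using sum_nonneg_eq_0_iff[OF finite_X] residual_x_nonneg sum_residual_x assms by metis
  then show ?thesis by simp
qed simp

lemma residual_y_normalised:
  assumes "v \<in> Y"
  shows "residual_y v * residual_mass / residual_mass = residual_y v"
proof (cases "residual_mass = 0")
  case True
  then have "residual_y v = 0"
    using sum_nonneg_eq_0_iff[OF finite_Y] residual_y_nonneg sum_residual_y assms by metis
  then show ?thesis by simp
qed simp

lemma plan_nonneg: "u \<in> X \<Longrightarrow> v \<in> Y \<Longrightarrow> 0 \<le> plan u v"
  using c_nonneg residual_x_nonneg residual_y_nonneg residual_mass_nonneg by (simp add: plan_def)

lemma plan_row_sum:
  assumes "u \<in> X"
  shows "(\<Sum>v\<in>Y. plan u v) = \<mu> u"
proof -
  have "(\<Sum>v\<in>Y. if u \<in> A \<and> v = p u then c else 0) = (if u \<in> A then c else 0)"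
    using finite_Y p_image by (auto simp: sum.delta')
  moreover have "(\<Sum>v\<in>Y. residual_x u * residual_y v / residual_mass) = residual_x u"
    using residual_x_normalised[OF assms]
    by (simp add: sum_divide_distrib[symmetric] sum_distrib_left[symmetric] sum_residual_y)
  ultimately show ?thesis by (simp add: plan_def sum.distrib residual_x_def)
qed

lemma plan_col_sum:
  assumes "v \<in> Y"
  shows "(\<Sum>u\<in>X. plan u v) = \<nu> v"
proof -
  have "(\<Sum>u\<in>X. if u \<in> A \<and> v = p u then c else 0) = (if v \<in> p ` A then c else 0)"
  proof (cases "v \<in> p ` A")
    case True
    then obtain u0 where u0: "u0 \<in> A" "v = p u0" by blast
    then have "u \<in> A \<and> v = p u \<longleftrightarrow> u = u0" for u
      using inj_p by (auto dest: inj_onD)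
    then show ?thesis using True u0 A_subset finite_X by (auto simp: sum.delta')
  next
    case False
    then have "(if u \<in> A \<and> v = p u then c else 0) = 0" for u
      by auto
    then show ?thesis
      using False by simp
  qed
  moreover have "(\<Sum>u\<in>X. residual_x u * residual_y v / residual_mass) = residual_y v"
    using residual_y_normalised[OF assms]
    by (simp add: sum_divide_distrib[symmetric] sum_distrib_right[symmetric] sum_residual_x
        mult.commute)
  ultimately show ?thesis by (simp add: plan_def sum.distrib residual_y_def)
qed

lemma plan_cost_le:
  assumes g_le: "\<And>u v. u \<in> X \<Longrightarrow> v \<in> Y \<Longrightarrow> g u v \<le> M"
  shows "(\<Sum>u\<in>X. \<Sum>v\<in>Y. plan u v * g u v)
           \<le> c * (\<Sum>u\<in>A. g u (p u)) + M * residual_mass"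
proof -
  have matched: "(\<Sum>u\<in>X. \<Sum>v\<in>Y. (if u \<in> A \<and> v = p u then c else 0) * g u v)
                   = c * (\<Sum>u\<in>A. g u (p u))"
  proof -
    have "(\<Sum>v\<in>Y. (if u \<in> A \<and> v = p u then c else 0) * g u v)
            = (if u \<in> A then c * g u (p u) else 0)" for u
    proof -
      have "(\<Sum>v\<in>Y. (if u \<in> A \<and> v = p u then c else 0) * g u v)
              = (\<Sum>v\<in>Y. if u \<in> A \<and> v = p u then c * g u (p u) else 0)"
        by (intro sum.cong) auto
      then show ?thesis
        using finite_Y p_image by (auto simp: sum.delta')
    qed
    then show ?thesis
      using finite_X A_subset by (simp add: sum.If_cases Int_absorb1 sum_distrib_left)
  qed
  have "(\<Sum>u\<in>X. \<Sum>v\<in>Y. residual_x u * residual_y v / residual_mass * g u v)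
          \<le> (\<Sum>u\<in>X. \<Sum>v\<in>Y. residual_x u * residual_y v / residual_mass * M)"
    using g_le residual_x_nonneg residual_y_nonneg residual_mass_nonneg
    by (intro sum_mono mult_left_mono) auto
  also have "\<dots> = M / residual_mass * (\<Sum>u\<in>X. \<Sum>v\<in>Y. residual_x u * residual_y v)"
    by (simp add: sum_distrib_left mult_ac)
  also have "\<dots> = M * residual_mass"
    by (simp add: sum_product[symmetric] sum_residual_x sum_residual_y)
  finally have residual: "(\<Sum>u\<in>X. \<Sum>v\<in>Y. residual_x u * residual_y v / residual_mass * g u v)
                           \<le> M * residual_mass" .
  have "(\<Sum>u\<in>X. \<Sum>v\<in>Y. plan u v * g u v)
          = (\<Sum>u\<in>X. \<Sum>v\<in>Y. (if u \<in> A \<and> v = p u then c else 0) * g u v)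
            + (\<Sum>u\<in>X. \<Sum>v\<in>Y. residual_x u * residual_y v / residual_mass * g u v)"
    unfolding plan_def distrib_right sum.distrib ..
  then show ?thesis
    using matched residual by linarith
qed

end

lemma graph_sym: "graph E \<Longrightarrow> E u v \<Longrightarrow> E v u"
  unfolding graph_def by blast

lemma graph_not_self_nbr: "graph E \<Longrightarrow> v \<notin> nbrs E v"
  unfolding graph_def nbrs_def by blast

lemma finite_nbrs: "graph E \<Longrightarrow> finite (nbrs E v)"
  unfolding graph_def nbrs_def by blast

lemma deg_pos: "graph E \<Longrightarrow> E x y \<Longrightarrow> 0 < deg E x"
  unfolding deg_def using finite_nbrs card_gt_0_iff by (fastforce simp: nbrs_def)

lemma W1_le_cost:
  assumes "\<pi> \<in> couplings E x y"
  shows "W1 E x y \<le> (\<Sum>(u,v)\<in>nbrs E x \<times> nbrs E y. \<pi> u v * gdist E u v)"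
  unfolding W1_def
proof (rule cInf_lower)
  show "bdd_below {(\<Sum>(u,v)\<in>nbrs E x \<times> nbrs E y. \<pi> u v * gdist E u v) |\<pi>. \<pi> \<in> couplings E x y}"
    by (rule bdd_belowI[where m=0])
      (auto simp: couplings_def gdist_nonneg intro!: sum_nonneg)
qed (use assms in blast)

lemma W1_le_matching:
  assumes G: "graph E" and xy: "E x y"
    and A: "A \<subseteq> nbrs E x" and p_image: "p ` A \<subseteq> nbrs E y" and inj_p: "inj_on p A"
  defines "D \<equiv> real (max (deg E x) (deg E y))"
  shows "W1 E x y \<le> (\<Sum>u\<in>A. gdist E u (p u)) / D + 3 * (1 - real (card A) / D)"
proof -
  let ?Nx = "nbrs E x" and ?Ny = "nbrs E y"
  have dx: "0 < deg E x" "deg E x \<le> D" and dy: "0 < deg E y" "deg E y \<le> D"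
    using deg_pos[OF G xy] deg_pos[OF G graph_sym[OF G xy]] by (auto simp: D_def)
  interpret M: partial_matching_plan ?Nx ?Ny A p "1 / D" "\<lambda>_. 1 / deg E x" "\<lambda>_. 1 / deg E y"
    using finite_nbrs[OF G] A p_image inj_p dx dy
    by unfold_locales (auto simp: deg_def frac_le)
  define \<pi> where "\<pi> u v = (if u \<in> ?Nx \<and> v \<in> ?Ny then M.plan u v else 0)" for u v
  have "\<pi> \<in> couplings E x y"
    using M.plan_nonneg M.plan_row_sum M.plan_col_sum by (simp add: couplings_def \<pi>_def)
  then have "W1 E x y \<le> (\<Sum>(u,v)\<in>?Nx \<times> ?Ny. \<pi> u v * gdist E u v)"
    by (rule W1_le_cost)
  also have "\<dots> = (\<Sum>u\<in>?Nx. \<Sum>v\<in>?Ny. M.plan u v * gdist E u v)"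
    by (simp add: sum.cartesian_product[symmetric] \<pi>_def)
  also have "\<dots> \<le> 1 / D * (\<Sum>u\<in>A. gdist E u (p u)) + 3 * M.residual_mass"
    using G xy by (intro M.plan_cost_le gdist_le_3) (auto simp: nbrs_def graph_sym)
  also have "M.residual_mass = 1 - real (card A) / D"
    unfolding M.residual_mass_def using dx by (simp add: deg_def)
  finally show ?thesis by simp
qed

lemma card_insert_Un_image:
  assumes "finite T" "z \<notin> T" "finite K" "inj_on f K" "f ` K \<inter> insert z T = {}"
  shows "card (insert z T \<union> f ` K) = card T + 1 + card K"
proof -
  have "card (insert z T \<union> f ` K) = card (insert z T) + card (f ` K)"
    by (rule card_Un_disjoint) (use assms in auto)
  then show ?thesis
    using assms by (simp add: card_image)
qed

lemma card_exclusive_nbrs: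
  assumes G: "graph E" and xy: "E x y"
  shows "card (nbrs E x - {y} - (nbrs E x \<inter> nbrs E y)) + card (nbrs E x \<inter> nbrs E y) + 1
           = deg E x"
proof -
  let ?T = "nbrs E x \<inter> nbrs E y"
  have fin: "finite (nbrs E x)"
    using finite_nbrs[OF G] .
  have sub: "insert y ?T \<subseteq> nbrs E x"
    using xy by (auto simp: nbrs_def)
  have "nbrs E x - {y} - ?T = nbrs E x - insert y ?T"
    by blast
  then have "card (nbrs E x - {y} - ?T) = card (nbrs E x) - card (insert y ?T)"
    using card_Diff_subset[OF finite_subset[OF sub fin] sub] by simp
  moreover have "card (insert y ?T) = card ?T + 1"
    using graph_not_self_nbr[OF G, of y] fin by simp
  moreover have "card (insert y ?T) \<le> card (nbrs E x)"
    using card_mono[OF fin sub] .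
  ultimately show ?thesis
    unfolding deg_def by linarith
qed

lemma two_matching_transport_map:
  fixes K :: "'i set" and a b :: "'i \<Rightarrow> 'a"
  assumes G: "graph E" and xy: "E x y" and K: "finite K"
    and a_inj: "inj_on a K" and a_in: "a ` K \<subseteq> nbrs E x - {y} - (nbrs E x \<inter> nbrs E y)"
    and b_inj: "inj_on b K" and b_in: "b ` K \<subseteq> nbrs E y - {x} - (nbrs E x \<inter> nbrs E y)"
    and match: "\<forall>i\<in>K. gdist E (a i) (b i) \<le> 2"
  obtains A p where "A \<subseteq> nbrs E x" "p ` A \<subseteq> nbrs E y" "inj_on p A"
    "card A = card (nbrs E x \<inter> nbrs E y) + 1 + card K"
    "(\<Sum>u\<in>A. gdist E u (p u)) \<le> 1 + 2 * real (card K)"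
proof
  let ?T = "nbrs E x \<inter> nbrs E y"
  define A where "A = insert y ?T \<union> a ` K"
  define p where "p u = (if u \<in> ?T then u else if u = y then x else b (the_inv_into K a u))" for u
  have fin_T: "finite ?T"
    using finite_nbrs[OF G] by blast
  have x_T: "x \<notin> ?T" and y_T: "y \<notin> ?T"
    using graph_not_self_nbr[OF G] by blast+
  have a_excl: "a i \<notin> ?T" "a i \<noteq> y" if "i \<in> K" for i
    using a_in that by auto
  have p_a: "p (a i) = b i" if "i \<in> K" for i
    using a_excl[OF that] by (auto simp: p_def the_inv_into_f_f[OF a_inj that])
  have p_y: "p y = x"
    using y_T by (auto simp: p_def)
  have p_T: "p ` ?T = ?T"
    by (simp add: p_def)
  have p_aK: "p ` a ` K = b ` K"
    unfolding image_image using p_a by (rule image_cong[OF refl])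
  have p_A: "p ` A = insert x ?T \<union> b ` K"
    unfolding A_def image_Un image_insert p_y p_T p_aK ..
  show "A \<subseteq> nbrs E x"
    using xy a_in by (auto simp: A_def nbrs_def)
  show "p ` A \<subseteq> nbrs E y"
    using G xy b_in by (auto simp: p_A nbrs_def graph_sym)
  show card_A: "card A = card ?T + 1 + card K"
    unfolding A_def using fin_T y_T K a_inj a_in by (intro card_insert_Un_image) auto
  have "card (p ` A) = card ?T + 1 + card K"
    unfolding p_A using fin_T x_T K b_inj b_in by (intro card_insert_Un_image) auto
  then show "inj_on p A"
    using card_A fin_T K by (intro eq_card_imp_inj_on) (auto simp: A_def)
  have "(\<Sum>u\<in>A. gdist E u (p u))
          = gdist E y x + (\<Sum>u\<in>?T. gdist E u u) + (\<Sum>i\<in>K. gdist E (a i) (b i))"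
  proof -
    have "(\<Sum>u\<in>A. gdist E u (p u))
            = (\<Sum>u\<in>insert y ?T. gdist E u (p u)) + (\<Sum>u\<in>a ` K. gdist E u (p u))"
      unfolding A_def using fin_T K a_excl by (intro sum.union_disjoint) auto
    also have "(\<Sum>u\<in>insert y ?T. gdist E u (p u)) = gdist E y x + (\<Sum>u\<in>?T. gdist E u u)"
      using fin_T y_T p_y by (simp add: p_def)
    also have "(\<Sum>u\<in>a ` K. gdist E u (p u)) = (\<Sum>i\<in>K. gdist E (a i) (b i))"
      using p_a by (simp add: sum.reindex[OF a_inj])
    finally show ?thesis
      by simp
  qed
  also have "\<dots> \<le> 1 + 0 + (\<Sum>i\<in>K. 2)"
    using G xy match by (intro add_mono sum_mono gdist_le_1) (auto simp: gdist_self graph_sym)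
  finally show "(\<Sum>u\<in>A. gdist E u (p u)) \<le> 1 + 2 * real (card K)"
    by simp
qed

theorem lemma5p1:
  fixes E :: "'a \<Rightarrow> 'a \<Rightarrow> bool" and x y :: 'a and k :: nat
    and a b :: "nat \<Rightarrow> 'a"
  assumes G: "graph E" and xy: "E x y"
    and kle: "k \<le> min (card (nbrs E x - {y} - (nbrs E x \<inter> nbrs E y)))
                       (card (nbrs E y - {x} - (nbrs E x \<inter> nbrs E y)))"
    and a_inj: "inj_on a {..<k}"
    and a_in: "a ` {..<k} \<subseteq> nbrs E x - {y} - (nbrs E x \<inter> nbrs E y)"
    and b_inj: "inj_on b {..<k}"
    and b_in: "b ` {..<k} \<subseteq> nbrs E y - {x} - (nbrs E x \<inter> nbrs E y)"
    and match: "\<forall>i<k. gdist E (a i) (b i) \<le> 2"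
  shows "ollivier E x y \<ge> -2 + (3 * real (card (nbrs E x \<inter> nbrs E y)) + real k + 2)
                                 / real (max (deg E x) (deg E y))
    \<and> (k = min (card (nbrs E x - {y} - (nbrs E x \<inter> nbrs E y)))
               (card (nbrs E y - {x} - (nbrs E x \<inter> nbrs E y))) \<longrightarrow>
       ollivier E x y \<ge> -2 + (2 * real (card (nbrs E x \<inter> nbrs E y))
                                 + real (min (deg E x) (deg E y)) + 1)
                                 / real (max (deg E x) (deg E y)))"
proof -
  let ?T = "nbrs E x \<inter> nbrs E y"
  define D where "D = real (max (deg E x) (deg E y))"
  obtain A p where A: "A \<subseteq> nbrs E x" "p ` A \<subseteq> nbrs E y" "inj_on p A"
      and card_A: "card A = card ?T + 1 + k"
      and cost_A: "(\<Sum>u\<in>A. gdist E u (p u)) \<le> 1 + 2 * real k"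
    using two_matching_transport_map[OF G xy _ a_inj a_in b_inj b_in] match by auto
  have D_pos: "0 < D"
    using deg_pos[OF G xy] by (simp add: D_def)
  have "(\<Sum>u\<in>A. gdist E u (p u)) / D \<le> (1 + 2 * real k) / D"
    using cost_A D_pos by (simp add: divide_right_mono)
  then have "W1 E x y \<le> (1 + 2 * real k) / D + 3 * (1 - real (card A) / D)"
    using W1_le_matching[OF G xy A] unfolding D_def by linarith
  also have "\<dots> = 3 - (3 * real (card ?T) + real k + 2) / D"
    using D_pos by (simp add: card_A field_simps)
  finally have first: "ollivier E x y \<ge> -2 + (3 * real (card ?T) + real k + 2) / D"
    unfolding ollivier_def by linarith
  moreover have "ollivier E x y \<ge> -2 + (2 * real (card ?T) + real (min (deg E x) (deg E y)) + 1) / D"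
    if "k = min (card (nbrs E x - {y} - ?T)) (card (nbrs E y - {x} - ?T))"
  proof -
    have "min (deg E x) (deg E y) = card ?T + 1 + k"
      using that card_exclusive_nbrs[OF G xy] card_exclusive_nbrs[OF G graph_sym[OF G xy]]
      by (simp add: Int_commute)
    then show ?thesis
      using first by (simp add: add_ac)
  qed
  ultimately show ?thesis
    unfolding D_def by blast
qed

end
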